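(* The Hilbert functions $H_{\mathbb{k}[\Delta_\ell]}$, $\ell=0,\dots,n$, span the extremal rays of the cone of Hilbert functions of Stanley–Reisner rings over $S=\mathbb{k}[x_1,\dots,x_n]$ (and this cone is simplicial).
   Context: For a simplicial complex $\Delta$ on $[n]$, $\mathbb{k}[\Delta]=S/I_\Delta$ is its Stanley–Reisner ring, with coarse Hilbert function $H_{\mathbb{k}[\Delta]}(i)=\dim_{\mathbb{k}}\mathbb{k}[\Delta]_i$. For $0\le\ell\le n$, $\Delta_\ell=\{\sigma\subseteq[n]:|\sigma|\le\ell\}$. The cone of Hilbert functions of Stanley–Reisner rings is the convex cone in $\mathbb{R}^{\mathbb{N}}$ spanned by the Hilbert functions of all $\mathbb{k}[\Delta]$, $\Delta$ a simplicial complex on $[n]$. *)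

theory Defs
  imports Complex_Main
begin

definition simplicial_complex :: "nat \<Rightarrow> nat set set \<Rightarrow> bool" where
  "simplicial_complex n \<Delta> \<longleftrightarrow>
     \<Delta> \<noteq> {} \<and> (\<forall>\<sigma>\<in>\<Delta>. \<sigma> \<subseteq> {1..n}) \<and> (\<forall>\<sigma>\<in>\<Delta>. \<forall>\<tau>. \<tau> \<subseteq> \<sigma> \<longrightarrow> \<tau> \<in> \<Delta>)"

definition skel :: "nat \<Rightarrow> nat \<Rightarrow> nat set set" where
  "skel n l = {\<sigma>. \<sigma> \<subseteq> {1..n} \<and> card \<sigma> \<le> l}"

text \<open>Monomials x^a of S = k[x_1..x_n] are exponent vectors a supported in [n];
  the degree is the sum of the exponents and the support is {j. a j > 0}.\<close>
definition monomials_deg :: "nat \<Rightarrow> nat \<Rightarrow> (nat \<Rightarrow> nat) set" where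
  "monomials_deg n i = {a. (\<forall>j. j \<notin> {1..n} \<longrightarrow> a j = 0) \<and> (\<Sum>j\<in>{1..n}. a j) = i}"

definition msupp :: "nat \<Rightarrow> (nat \<Rightarrow> nat) \<Rightarrow> nat set" where
  "msupp n a = {j\<in>{1..n}. a j \<noteq> 0}"

text \<open>The Stanley--Reisner ideal I_Delta is generated by the squarefree monomials x^sigma,
  sigma a non-face. A monomial x^a lies in I_Delta iff some non-face is contained in its support.\<close>
definition in_SR_ideal :: "nat \<Rightarrow> nat set set \<Rightarrow> (nat \<Rightarrow> nat) \<Rightarrow> bool" where
  "in_SR_ideal n \<Delta> a \<longleftrightarrow> (\<exists>\<sigma>. \<sigma> \<subseteq> {1..n} \<and> \<sigma> \<notin> \<Delta> \<and> \<sigma> \<subseteq> msupp n a)"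

text \<open>Coarse Hilbert function of k[Delta] = S/I_Delta: since I_Delta is a monomial ideal, the
  monomials not in I_Delta form a k-basis of k[Delta], so dim_k k[Delta]_i is the number of
  degree-i monomials outside I_Delta (independent of the field k).\<close>
definition SR_hilbert :: "nat \<Rightarrow> nat set set \<Rightarrow> nat \<Rightarrow> real" where
  "SR_hilbert n \<Delta> i = real (card {a \<in> monomials_deg n i. \<not> in_SR_ideal n \<Delta> a})"

definition SR_cone :: "nat \<Rightarrow> (nat \<Rightarrow> real) set" where
  "SR_cone n = {f. \<exists>c :: nat set set \<Rightarrow> real.
      (\<forall>\<Delta>. 0 \<le> c \<Delta>) \<and>
      (\<forall>i. f i = (\<Sum>\<Delta>\<in>{\<Delta>. simplicial_complex n \<Delta>}. c \<Delta> * SR_hilbert n \<Delta> i))}"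

definition extremal_ray :: "(nat \<Rightarrow> real) set \<Rightarrow> (nat \<Rightarrow> real) \<Rightarrow> bool" where
  "extremal_ray C v \<longleftrightarrow> v \<in> C \<and> v \<noteq> (\<lambda>i. 0) \<and>
     (\<forall>a\<in>C. \<forall>b\<in>C. (\<forall>i. v i = a i + b i) \<longrightarrow>
        (\<exists>t\<ge>0. \<forall>i. a i = t * v i) \<and> (\<exists>t\<ge>0. \<forall>i. b i = t * v i))"

end

theory Submission
  imports Defs
begin

text \<open>
  Counting monomials by their support gives H_\<Delta>(i) = \<Sum>_j f_j(\<Delta>) g_j(i), where f_j(\<Delta>) is
  the number of j-element faces and g_j(i) the number of degree-i monomials whose support is a
  fixed j-set. Since g_j(i) = 0 for i < j and g_j(j) > 0, the g_j are linearly independent; as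
  f_j(\<Delta>_l) = C(n,j) for j \<le> l, so are the H_{\<Delta>_l}. Double counting pairs of faces
  \<tau> \<subset> \<sigma> of sizes j and j+1 shows that r_j = f_j(\<Delta>) / C(n,j) decreases in j, hence
  H_\<Delta> = \<Sum>_l (r_l - r_{l+1}) H_{\<Delta>_l} is a nonnegative combination. So the cone is
  spanned by the linearly independent H_{\<Delta>_l}: it is simplicial, with exactly these rays.
\<close>

section \<open>Cones spanned by linearly independent vectors\<close>

definition nonneg_span :: "nat \<Rightarrow> (nat \<Rightarrow> nat \<Rightarrow> real) \<Rightarrow> (nat \<Rightarrow> real) set" where
  "nonneg_span n v = {f. \<exists>c. (\<forall>l. 0 \<le> c l) \<and> (\<forall>i. f i = (\<Sum>l\<le>n. c l * v l i))}"

definition lin_indep_upto :: "nat \<Rightarrow> (nat \<Rightarrow> nat \<Rightarrow> real) \<Rightarrow> bool" where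
  "lin_indep_upto n v \<longleftrightarrow> (\<forall>c. (\<forall>i. (\<Sum>l\<le>n. c l * v l i) = 0) \<longrightarrow> (\<forall>l\<le>n. c l = 0))"

lemma sum_delta_mult:
  "l \<le> (n::nat) \<Longrightarrow> (\<Sum>k\<le>n. (if k = l then t else 0) * v k i) = t * (v l i :: real)"
  by (simp add: if_distrib[of "\<lambda>x. x * _"] cong: if_cong)

lemma lin_indep_upto_coeff_eq:
  assumes "lin_indep_upto n v" "\<forall>i. (\<Sum>l\<le>n. c l * v l i) = (\<Sum>l\<le>n. d l * v l i)" "l \<le> n"
  shows "c l = d l"
proof -
  have "\<forall>i. (\<Sum>l\<le>n. (c l - d l) * v l i) = 0"
    using assms(2) by (simp add: left_diff_distrib sum_subtractf)
  then show ?thesis using assms(1,3) unfolding lin_indep_upto_def by fastforce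
qed

lemma lin_indep_upto_nonzero:
  assumes "lin_indep_upto n v" "l \<le> n"
  shows "v l \<noteq> (\<lambda>i. 0)"
proof
  assume "v l = (\<lambda>i. 0)"
  then have "\<forall>i. (\<Sum>k\<le>n. (if k = l then 1 else 0) * v k i) = 0"
    by (simp only: sum_delta_mult[OF assms(2)]) simp
  then show False using assms unfolding lin_indep_upto_def by force
qed

lemma lin_indep_upto_triangular:
  assumes zero: "\<And>j i. j \<le> n \<Longrightarrow> i < j \<Longrightarrow> u j i = 0"
    and diag: "\<And>j. j \<le> n \<Longrightarrow> u j j \<noteq> 0"
  shows "lin_indep_upto n u"
  unfolding lin_indep_upto_def
proof (intro allI impI)
  fix d j assume comb: "\<forall>i. (\<Sum>k\<le>n. d k * u k i) = 0" and "j \<le> n"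
  then show "d j = 0"
  proof (induction j rule: less_induct)
    case (less j)
    have "(\<Sum>k\<le>n. d k * u k j) = (\<Sum>k\<le>n. if k = j then d j * u j j else 0)"
    proof (rule sum.cong)
      fix k assume "k \<in> {..n}"
      then consider "k < j" | "k = j" | "j < k \<and> k \<le> n" by fastforce
      then show "d k * u k j = (if k = j then d j * u j j else 0)"
        by cases (use less zero in auto)
    qed simp
    then have "d j * u j j = 0" using less.prems by simp
    then show ?case using diag less.prems(2) by simp
  qed
qed

lemma nonneg_span_summand_of_generator:
  assumes indep: "lin_indep_upto n v" and l: "l \<le> n"
    and a: "a \<in> nonneg_span n v" and b: "b \<in> nonneg_span n v"
    and ab: "\<forall>i. a i + b i = t * v l i"
  shows "\<exists>s\<ge>0. \<forall>i. a i = s * v l i"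
proof -
  obtain \<alpha> where \<alpha>: "\<forall>k. 0 \<le> \<alpha> k" "\<forall>i. a i = (\<Sum>k\<le>n. \<alpha> k * v k i)"
    using a unfolding nonneg_span_def by blast
  obtain \<beta> where \<beta>: "\<forall>k. 0 \<le> \<beta> k" "\<forall>i. b i = (\<Sum>k\<le>n. \<beta> k * v k i)"
    using b unfolding nonneg_span_def by blast
  have coeffs: "\<forall>i. (\<Sum>k\<le>n. (\<alpha> k + \<beta> k) * v k i) = (\<Sum>k\<le>n. (if k = l then t else 0) * v k i)"
  proof
    fix i
    have "(\<Sum>k\<le>n. (\<alpha> k + \<beta> k) * v k i) = a i + b i"
      using \<alpha>(2) \<beta>(2) by (simp add: distrib_right sum.distrib)
    then show "(\<Sum>k\<le>n. (\<alpha> k + \<beta> k) * v k i) = (\<Sum>k\<le>n. (if k = l then t else 0) * v k i)"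
      unfolding sum_delta_mult[OF l] using ab by simp
  qed
  have \<alpha>_single: "\<alpha> k = (if k = l then \<alpha> l else 0)" if "k \<le> n" for k
  proof -
    have "\<alpha> k + \<beta> k = (if k = l then t else 0)"
      using lin_indep_upto_coeff_eq[OF indep coeffs that] .
    moreover have "0 \<le> \<alpha> k" "0 \<le> \<beta> k" using \<alpha>(1) \<beta>(1) by blast+
    ultimately show ?thesis by (cases "k = l") simp_all
  qed
  have "a i = \<alpha> l * v l i" for i
  proof -
    have "a i = (\<Sum>k\<le>n. (if k = l then \<alpha> l else 0) * v k i)"
      unfolding \<alpha>(2)[rule_format] by (rule sum.cong[OF refl], subst \<alpha>_single) auto
    then show ?thesis unfolding sum_delta_mult[OF l] .
  qed
  then show ?thesis using \<alpha>(1) by blast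
qed

lemma extremal_ray_nonneg_span_iff:
  assumes indep: "lin_indep_upto n v"
  shows "extremal_ray (nonneg_span n v) w \<longleftrightarrow> (\<exists>l\<le>n. \<exists>t>0. \<forall>i. w i = t * v l i)"
proof
  assume ext: "extremal_ray (nonneg_span n v) w"
  then obtain c where c: "\<forall>k. 0 \<le> c k" "\<forall>i. w i = (\<Sum>k\<le>n. c k * v k i)"
    unfolding extremal_ray_def nonneg_span_def by blast
  have "\<exists>l\<le>n. c l \<noteq> 0"
  proof (rule ccontr)
    assume "\<not> (\<exists>l\<le>n. c l \<noteq> 0)"
    then have "w = (\<lambda>i. 0)" using c(2) by (simp add: fun_eq_iff)
    then show False using ext unfolding extremal_ray_def by simp
  qed
  then obtain l where l: "l \<le> n" "0 < c l" using c(1) by (metis order_le_neq_trans)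
  define a where "a i = c l * v l i" for i
  define b where "b i = (\<Sum>k\<le>n. (c(l := 0)) k * v k i)" for i
  have split: "\<forall>i. w i = a i + b i"
  proof
    fix i
    have "(\<Sum>k\<le>n. c k * v k i)
        = (\<Sum>k\<le>n. (if k = l then c l else 0) * v k i + (c(l := 0)) k * v k i)"
      by (intro sum.cong) (auto simp: distrib_right)
    then show "w i = a i + b i"
      using c(2) sum_delta_mult[OF l(1)] by (simp add: a_def b_def sum.distrib)
  qed
  have a_span: "a \<in> nonneg_span n v"
    unfolding nonneg_span_def
  proof (intro CollectI exI[of _ "\<lambda>k. if k = l then c l else 0"] conjI allI)
    show "a i = (\<Sum>k\<le>n. (if k = l then c l else 0) * v k i)" for i
      unfolding sum_delta_mult[OF l(1)] a_def ..
  qed (use c(1) in simp)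
  have b_span: "b \<in> nonneg_span n v"
    using c(1) unfolding nonneg_span_def b_def by (intro CollectI exI[of _ "c(l := 0)"]) simp
  obtain t where t: "0 \<le> t" "\<forall>i. a i = t * w i"
    using ext a_span b_span split unfolding extremal_ray_def by blast
  have "t \<noteq> 0"
  proof
    assume "t = 0"
    then have "v l = (\<lambda>i. 0)" using t(2) l(2) by (simp add: a_def fun_eq_iff)
    then show False using lin_indep_upto_nonzero[OF indep l(1)] by simp
  qed
  then have "\<forall>i. w i = (c l / t) * v l i" using t(2) by (simp add: a_def field_simps)
  then show "\<exists>l\<le>n. \<exists>t>0. \<forall>i. w i = t * v l i"
    using l t(1) \<open>t \<noteq> 0\<close> by (intro exI[of _ l] conjI exI[of _ "c l / t"]) auto
next
  assume "\<exists>l\<le>n. \<exists>t>0. \<forall>i. w i = t * v l i"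
  then obtain l t where l: "l \<le> n" and t: "0 < t" and w: "\<forall>i. w i = t * v l i" by blast
  have "w \<in> nonneg_span n v"
    unfolding nonneg_span_def
  proof (intro CollectI exI[of _ "\<lambda>k. if k = l then t else 0"] conjI allI)
    show "w i = (\<Sum>k\<le>n. (if k = l then t else 0) * v k i)" for i
      unfolding sum_delta_mult[OF l] using w ..
  qed (use t in simp)
  moreover have "w \<noteq> (\<lambda>i. 0)"
    using lin_indep_upto_nonzero[OF indep l] t w by (auto simp: fun_eq_iff)
  moreover have "\<exists>s\<ge>0. \<forall>i. a i = s * w i"
    if a: "a \<in> nonneg_span n v" and b: "b \<in> nonneg_span n v" and wab: "\<forall>i. w i = a i + b i"
    for a b
  proof -
    have "\<forall>i. a i + b i = t * v l i" using wab w by simp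
    then obtain s where "0 \<le> s" "\<forall>i. a i = s * v l i"
      using nonneg_span_summand_of_generator[OF indep l a b] by blast
    then show ?thesis using t w by (intro exI[of _ "s / t"]) (simp add: field_simps)
  qed
  ultimately show "extremal_ray (nonneg_span n v) w"
    unfolding extremal_ray_def by (metis add.commute)
qed

lemma nonneg_comb_in_nonneg_span:
  assumes "finite A" and c: "\<forall>x. 0 \<le> c x" and g: "\<forall>x\<in>A. g x \<in> nonneg_span n v"
  shows "(\<lambda>i. \<Sum>x\<in>A. c x * g x i) \<in> nonneg_span n v"
proof -
  have "\<forall>x\<in>A. \<exists>w. (\<forall>l. 0 \<le> w l) \<and> (\<forall>i. g x i = (\<Sum>l\<le>n. w l * v l i))"
    using g unfolding nonneg_span_def by blast
  then obtain W where W: "\<forall>x\<in>A. (\<forall>l. 0 \<le> W x l) \<and> (\<forall>i. g x i = (\<Sum>l\<le>n. W x l * v l i))"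
    by (rule bchoice[THEN exE])
  have eq: "(\<Sum>x\<in>A. c x * g x i) = (\<Sum>l\<le>n. (\<Sum>x\<in>A. c x * W x l) * v l i)" for i
  proof -
    have "(\<Sum>x\<in>A. c x * g x i) = (\<Sum>x\<in>A. \<Sum>l\<le>n. c x * W x l * v l i)"
      using W by (intro sum.cong refl) (simp add: sum_distrib_left mult.assoc)
    also have "\<dots> = (\<Sum>l\<le>n. (\<Sum>x\<in>A. c x * W x l) * v l i)"
      by (subst sum.swap) (simp only: sum_distrib_right)
    finally show ?thesis .
  qed
  have nonneg: "0 \<le> (\<Sum>x\<in>A. c x * W x l)" for l
    using c W by (intro sum_nonneg) simp
  show ?thesis
    unfolding nonneg_span_def
    by (intro CollectI exI[of _ "\<lambda>l. \<Sum>x\<in>A. c x * W x l"] conjI allI) (simp_all only: eq nonneg)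
qed

section \<open>Monomials counted by their support\<close>

lemma finite_monomials_deg: "finite (monomials_deg n i)"
proof -
  have "a j \<le> i" if "a \<in> monomials_deg n i" "j \<in> {1..n}" for a j
    using that member_le_sum[of j "{1..n}" a] by (simp add: monomials_deg_def)
  then have "monomials_deg n i \<subseteq>
      {a. \<forall>j. (j \<in> {1..n} \<longrightarrow> a j \<in> {0..i}) \<and> (j \<notin> {1..n} \<longrightarrow> a j = 0)}"
    by (auto simp: monomials_deg_def)
  then show ?thesis
    by (rule finite_subset) (rule finite_set_of_finite_funs; simp)
qed

definition supp_monomials :: "nat \<Rightarrow> nat set \<Rightarrow> nat \<Rightarrow> (nat \<Rightarrow> nat) set" where
  "supp_monomials n \<sigma> i = {a \<in> monomials_deg n i. msupp n a = \<sigma>}"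

lemma finite_supp_monomials: "finite (supp_monomials n \<sigma> i)"
  by (simp add: supp_monomials_def finite_monomials_deg)

lemma card_supp_monomials_le:
  assumes f: "bij_betw f \<tau> \<sigma>" and "\<tau> \<subseteq> {1..n}" "\<sigma> \<subseteq> {1..n}"
  shows "card (supp_monomials n \<sigma> i) \<le> card (supp_monomials n \<tau> i)"
proof -
  define \<Phi> where "\<Phi> a = (\<lambda>j. if j \<in> \<tau> then a (f j) else 0)" for a :: "nat \<Rightarrow> nat"
  have supp: "a x \<noteq> 0 \<longleftrightarrow> x \<in> \<sigma>" if "a \<in> supp_monomials n \<sigma> i" for a x
    using that assms(3) by (auto simp: supp_monomials_def monomials_deg_def msupp_def)
  have "inj_on \<Phi> (supp_monomials n \<sigma> i)"
  proof (rule inj_onI, rule ext)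
    fix a b x assume a: "a \<in> supp_monomials n \<sigma> i" and b: "b \<in> supp_monomials n \<sigma> i"
      and eq: "\<Phi> a = \<Phi> b"
    show "a x = b x"
    proof (cases "x \<in> \<sigma>")
      case True
      then obtain j where "j \<in> \<tau>" "x = f j" using f by (auto simp: bij_betw_def)
      then show ?thesis using fun_cong[OF eq, of j] by (simp add: \<Phi>_def)
    next
      case False
      then show ?thesis using supp[OF a] supp[OF b] by (metis (full_types))
    qed
  qed
  moreover have "\<Phi> ` supp_monomials n \<sigma> i \<subseteq> supp_monomials n \<tau> i"
  proof
    fix b assume "b \<in> \<Phi> ` supp_monomials n \<sigma> i"
    then obtain a where a: "a \<in> supp_monomials n \<sigma> i" and b: "b = \<Phi> a" by blast
    have "(\<Sum>j\<in>{1..n}. b j) = (\<Sum>j\<in>\<tau>. a (f j))"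
      using assms(2) by (simp add: b \<Phi>_def sum.If_cases Int_absorb1)
    also have "\<dots> = (\<Sum>x\<in>\<sigma>. a x)" using sum.reindex_bij_betw[OF f] .
    also have "\<dots> = (\<Sum>x\<in>{1..n}. a x)"
      using assms(3) supp[OF a] by (intro sum.mono_neutral_left) auto
    also have "\<dots> = i" using a by (simp add: supp_monomials_def monomials_deg_def)
    finally have "(\<Sum>j\<in>{1..n}. b j) = i" .
    moreover have "msupp n b = \<tau>"
      using assms(2) supp[OF a] f by (auto simp: msupp_def b \<Phi>_def bij_betw_def)
    ultimately show "b \<in> supp_monomials n \<tau> i"
      using assms(2) by (auto simp: supp_monomials_def monomials_deg_def b \<Phi>_def)
  qed
  ultimately show ?thesis by (rule card_inj_on_le) (rule finite_supp_monomials)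
qed

lemma card_supp_monomials_eq:
  assumes "\<sigma> \<subseteq> {1..n}" "\<tau> \<subseteq> {1..n}" "card \<sigma> = card \<tau>"
  shows "card (supp_monomials n \<sigma> i) = card (supp_monomials n \<tau> i)"
proof -
  have "finite \<sigma>" "finite \<tau>" using assms(1,2) finite_subset by blast+
  then obtain f where f: "bij_betw f \<tau> \<sigma>" using finite_same_card_bij assms(3) by metis
  show ?thesis
    using card_supp_monomials_le[OF f assms(2,1)]
      card_supp_monomials_le[OF bij_betw_inv_into[OF f] assms(1,2)] by (rule antisym)
qed

definition supp_count :: "nat \<Rightarrow> nat \<Rightarrow> nat \<Rightarrow> nat" where
  "supp_count n j i = card (supp_monomials n {1..j} i)"

definition f_vector :: "nat set set \<Rightarrow> nat \<Rightarrow> nat" where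
  "f_vector \<Delta> j = card {\<sigma> \<in> \<Delta>. card \<sigma> = j}"

lemma finite_simplicial_complex: "simplicial_complex n \<Delta> \<Longrightarrow> finite \<Delta>"
  by (rule finite_subset[of _ "Pow {1..n}"]) (auto simp: simplicial_complex_def)

lemma finite_simplicial_complexes: "finite {\<Delta>. simplicial_complex n \<Delta>}"
  by (rule finite_subset[of _ "Pow (Pow {1..n})"]) (auto simp: simplicial_complex_def)

lemma in_SR_ideal_iff:
  assumes "simplicial_complex n \<Delta>"
  shows "in_SR_ideal n \<Delta> a \<longleftrightarrow> msupp n a \<notin> \<Delta>"
proof -
  have "msupp n a \<subseteq> {1..n}" by (auto simp: msupp_def)
  then show ?thesis
    using assms unfolding simplicial_complex_def in_SR_ideal_def by blast
qed

lemma card_supp_monomials_eq_supp_count: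
  "\<sigma> \<subseteq> {1..n} \<Longrightarrow> card (supp_monomials n \<sigma> i) = supp_count n (card \<sigma>) i"
  unfolding supp_count_def
proof (rule card_supp_monomials_eq)
  assume "\<sigma> \<subseteq> {1..n}"
  then show "{1..card \<sigma>} \<subseteq> {1..n}" using card_mono[of "{1..n}" \<sigma>] by auto
qed auto

lemma SR_hilbert_eq_sum_f_vector:
  assumes \<Delta>: "simplicial_complex n \<Delta>"
  shows "SR_hilbert n \<Delta> i = (\<Sum>j\<le>n. real (f_vector \<Delta> j) * real (supp_count n j i))"
proof -
  have faces: "\<sigma> \<subseteq> {1..n}" if "\<sigma> \<in> \<Delta>" for \<sigma>
    using \<Delta> that by (simp add: simplicial_complex_def)
  have "{a \<in> monomials_deg n i. \<not> in_SR_ideal n \<Delta> a} = (\<Union>\<sigma>\<in>\<Delta>. supp_monomials n \<sigma> i)"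
    using in_SR_ideal_iff[OF \<Delta>] by (auto simp: supp_monomials_def)
  moreover have "card (\<Union>\<sigma>\<in>\<Delta>. supp_monomials n \<sigma> i) = (\<Sum>\<sigma>\<in>\<Delta>. card (supp_monomials n \<sigma> i))"
    by (rule card_UN_disjoint)
      (simp_all add: finite_simplicial_complex[OF \<Delta>] finite_supp_monomials,
       auto simp: supp_monomials_def)
  ultimately have "SR_hilbert n \<Delta> i = (\<Sum>\<sigma>\<in>\<Delta>. real (card (supp_monomials n \<sigma> i)))"
    by (simp add: SR_hilbert_def)
  also have "\<dots> = (\<Sum>\<sigma>\<in>\<Delta>. real (supp_count n (card \<sigma>) i))"
    using faces card_supp_monomials_eq_supp_count by simp
  also have "\<dots> = (\<Sum>j\<le>n. \<Sum>\<sigma>\<in>{\<sigma>\<in>\<Delta>. card \<sigma> = j}. real (supp_count n (card \<sigma>) i))"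
  proof (rule sum.group[symmetric])
    show "card ` \<Delta> \<subseteq> {..n}" using faces card_mono[of "{1..n}"] by fastforce
  qed (simp_all add: finite_simplicial_complex[OF \<Delta>])
  also have "\<dots> = (\<Sum>j\<le>n. real (f_vector \<Delta> j) * real (supp_count n j i))"
    by (simp add: f_vector_def)
  finally show ?thesis .
qed

lemma supp_count_eq_0:
  assumes "i < j"
  shows "supp_count n j i = 0"
proof -
  have False if a: "a \<in> supp_monomials n {1..j} i" for a
  proof -
    have supp: "msupp n a = {1..j}" and deg: "(\<Sum>k\<in>{1..n}. a k) = i"
      using a by (simp_all add: supp_monomials_def monomials_deg_def)
    have mem: "k \<in> {1..n} \<and> a k \<noteq> 0" if "k \<in> {1..j}" for k
      using that supp unfolding msupp_def by blast
    then have sub: "{1..j} \<subseteq> {1..n}" by blast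
    have pos: "1 \<le> a k" if "k \<in> {1..j}" for k
      using mem[OF that] by simp
    have "j = (\<Sum>k\<in>{1..j}. 1::nat)" by simp
    also have "\<dots> \<le> (\<Sum>k\<in>{1..j}. a k)" using pos by (rule sum_mono)
    also have "\<dots> \<le> (\<Sum>k\<in>{1..n}. a k)" using sub by (intro sum_mono2) simp_all
    finally show False using deg assms by simp
  qed
  then have "supp_monomials n {1..j} i = {}" by blast
  then show ?thesis by (simp add: supp_count_def)
qed

lemma supp_count_diag_pos:
  assumes "j \<le> n"
  shows "0 < supp_count n j j"
proof -
  define a where "a k = (if k \<in> {1..j} then 1 else 0 :: nat)" for k
  have "(\<Sum>k\<in>{1..n}. a k) = (\<Sum>k\<in>{1..j}. a k)"
    using assms by (intro sum.mono_neutral_right) (auto simp: a_def)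
  also have "\<dots> = j" by (simp add: a_def)
  finally have "a \<in> supp_monomials n {1..j} j"
    using assms by (auto simp: supp_monomials_def monomials_deg_def msupp_def a_def)
  then show ?thesis
    unfolding supp_count_def using finite_supp_monomials card_gt_0_iff by blast
qed

section \<open>Hilbert functions of skeleta\<close>

lemma simplicial_complex_skel: "simplicial_complex n (skel n l)"
  unfolding simplicial_complex_def
proof (intro conjI ballI allI impI)
  show "skel n l \<noteq> {}" using empty_subsetI by (fastforce simp: skel_def)
next
  fix \<sigma> \<tau> assume "\<sigma> \<in> skel n l" "\<tau> \<subseteq> \<sigma>"
  moreover have "finite \<sigma>" using \<open>\<sigma> \<in> skel n l\<close> finite_subset by (auto simp: skel_def)
  ultimately show "\<tau> \<in> skel n l" using card_mono[of \<sigma> \<tau>] by (auto simp: skel_def)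
qed (simp add: skel_def)

lemma f_vector_skel: "f_vector (skel n l) j = (if j \<le> l then n choose j else 0)"
proof -
  have "{\<sigma> \<in> skel n l. card \<sigma> = j} = (if j \<le> l then {\<sigma>. \<sigma> \<subseteq> {1..n} \<and> card \<sigma> = j} else {})"
    by (auto simp: skel_def)
  then show ?thesis by (simp add: f_vector_def n_subsets)
qed

lemma sum_SR_hilbert_skel:
  fixes c :: "nat \<Rightarrow> real"
  shows "(\<Sum>l\<le>n. c l * SR_hilbert n (skel n l) i)
       = (\<Sum>j\<le>n. (\<Sum>l=j..n. c l) * (real (n choose j) * real (supp_count n j i)))"
proof -
  have "(\<Sum>l\<le>n. c l * SR_hilbert n (skel n l) i)
      = (\<Sum>l\<le>n. \<Sum>j\<le>n. (if j \<le> l then c l else 0) * (real (n choose j) * real (supp_count n j i)))"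
    unfolding SR_hilbert_eq_sum_f_vector[OF simplicial_complex_skel] f_vector_skel sum_distrib_left
    by (intro sum.cong refl) simp
  also have "\<dots> = (\<Sum>j\<le>n. \<Sum>l\<le>n. (if j \<le> l then c l else 0) * (real (n choose j) * real (supp_count n j i)))"
    by (rule sum.swap)
  also have "\<dots> = (\<Sum>j\<le>n. (\<Sum>l=j..n. c l) * (real (n choose j) * real (supp_count n j i)))"
  proof (rule sum.cong[OF refl])
    fix j
    have "(\<Sum>l\<le>n. if j \<le> l then c l else 0) = (\<Sum>l\<in>{l\<in>{..n}. j \<le> l}. c l)"
      by (rule sum.inter_filter[symmetric]) simp
    also have "{l\<in>{..n}. j \<le> l} = {j..n}" by auto
    finally show "(\<Sum>l\<le>n. (if j \<le> l then c l else 0) * (real (n choose j) * real (supp_count n j i)))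
        = (\<Sum>l=j..n. c l) * (real (n choose j) * real (supp_count n j i))"
      by (simp only: sum_distrib_right[symmetric])
  qed
  finally show ?thesis .
qed

lemma lin_indep_upto_SR_hilbert_skel: "lin_indep_upto n (\<lambda>l. SR_hilbert n (skel n l))"
  unfolding lin_indep_upto_def
proof (intro allI impI)
  fix c l assume comb: "\<forall>i. (\<Sum>l\<le>n. c l * SR_hilbert n (skel n l) i) = 0" and "l \<le> n"
  define D where "D j = (\<Sum>l=j..n. c l)" for j
  have "lin_indep_upto n (\<lambda>j i. real (n choose j) * real (supp_count n j i))"
    by (rule lin_indep_upto_triangular) (simp_all add: supp_count_eq_0 supp_count_diag_pos)
  moreover have "\<forall>i. (\<Sum>j\<le>n. D j * (real (n choose j) * real (supp_count n j i))) = 0"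
    using comb unfolding sum_SR_hilbert_skel D_def .
  ultimately have D: "D j = 0" if "j \<le> n" for j
    using that unfolding lin_indep_upto_def by blast
  have "c l = D l - D (Suc l)"
    using \<open>l \<le> n\<close> by (simp add: D_def sum.atLeast_Suc_atMost)
  moreover have "D (Suc l) = 0"
    using D by (cases "Suc l \<le> n") (simp_all add: D_def)
  ultimately show "c l = 0" using D \<open>l \<le> n\<close> by simp
qed

section \<open>Decomposition along normalized face numbers\<close>

lemma f_vector_Suc_mult_le:
  assumes \<Delta>: "simplicial_complex n \<Delta>"
  shows "f_vector \<Delta> (Suc j) * Suc j \<le> f_vector \<Delta> j * (n - j)"
proof -
  define F0 where "F0 = {\<sigma>\<in>\<Delta>. card \<sigma> = j}"
  define F1 where "F1 = {\<sigma>\<in>\<Delta>. card \<sigma> = Suc j}"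
  have fin: "finite F0" "finite F1"
    using finite_simplicial_complex[OF \<Delta>] unfolding F0_def F1_def by simp_all
  have faces: "\<forall>\<sigma>\<in>\<Delta>. \<sigma> \<subseteq> {1..n}" and closed: "\<forall>\<sigma>\<in>\<Delta>. \<forall>\<tau>. \<tau> \<subseteq> \<sigma> \<longrightarrow> \<tau> \<in> \<Delta>"
    using \<Delta> unfolding simplicial_complex_def by blast+
  have below: "(\<Sum>\<tau>\<in>F0. of_bool (\<tau> \<subseteq> \<sigma>)) = Suc j" if "\<sigma> \<in> F1" for \<sigma>
  proof -
    have \<sigma>: "\<sigma> \<in> \<Delta>" "card \<sigma> = Suc j" using that unfolding F1_def by auto
    then have "finite \<sigma>" using faces finite_subset[of \<sigma> "{1..n}"] by auto
    have "F0 \<inter> {\<tau>. \<tau> \<subseteq> \<sigma>} = {\<tau>. \<tau> \<subseteq> \<sigma> \<and> card \<tau> = j}"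
      using \<sigma>(1) closed unfolding F0_def by blast
    then have "(\<Sum>\<tau>\<in>F0. of_bool (\<tau> \<subseteq> \<sigma>)) = card \<sigma> choose j"
      using fin n_subsets[OF \<open>finite \<sigma>\<close>] by simp
    then show ?thesis using \<sigma>(2) by simp
  qed
  have above: "(\<Sum>\<sigma>\<in>F1. of_bool (\<tau> \<subseteq> \<sigma>)) \<le> n - j" if "\<tau> \<in> F0" for \<tau>
  proof -
    have "\<tau> \<in> \<Delta>" "card \<tau> = j" using that unfolding F0_def by auto
    then have \<tau>: "\<tau> \<subseteq> {1..n}" "card \<tau> = j" "finite \<tau>"
      using faces finite_subset[of \<tau> "{1..n}"] by auto
    have "F1 \<inter> {\<sigma>. \<tau> \<subseteq> \<sigma>} \<subseteq> (\<lambda>x. insert x \<tau>) ` ({1..n} - \<tau>)"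
    proof
      fix \<sigma> assume "\<sigma> \<in> F1 \<inter> {\<sigma>. \<tau> \<subseteq> \<sigma>}"
      then have "\<sigma> \<in> \<Delta>" "card \<sigma> = Suc j" "\<tau> \<subseteq> \<sigma>" unfolding F1_def by auto
      then have \<sigma>: "\<sigma> \<subseteq> {1..n}" "card \<sigma> = Suc j" "\<tau> \<subseteq> \<sigma>" "finite \<sigma>"
        using faces finite_subset[of \<sigma> "{1..n}"] by auto
      then have "card (\<sigma> - \<tau>) = 1" using \<tau> by (simp add: card_Diff_subset)
      then obtain x where "\<sigma> - \<tau> = {x}" by (meson card_1_singletonE)
      then have "\<sigma> = insert x \<tau>" "x \<in> {1..n} - \<tau>" using \<sigma> by auto
      then show "\<sigma> \<in> (\<lambda>x. insert x \<tau>) ` ({1..n} - \<tau>)" by blast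
    qed
    then have "card (F1 \<inter> {\<sigma>. \<tau> \<subseteq> \<sigma>}) \<le> card ((\<lambda>x. insert x \<tau>) ` ({1..n} - \<tau>))"
      by (rule card_mono[rotated]) simp
    also have "\<dots> \<le> card ({1..n} - \<tau>)" by (rule card_image_le) simp
    also have "\<dots> = n - j" using \<tau> by (simp add: card_Diff_subset)
    finally show ?thesis using fin by simp
  qed
  have "f_vector \<Delta> (Suc j) * Suc j = (\<Sum>\<sigma>\<in>F1. \<Sum>\<tau>\<in>F0. of_bool (\<tau> \<subseteq> \<sigma>))"
    using below by (simp add: f_vector_def F1_def)
  also have "\<dots> = (\<Sum>\<tau>\<in>F0. \<Sum>\<sigma>\<in>F1. of_bool (\<tau> \<subseteq> \<sigma>))" by (rule sum.swap)
  also have "\<dots> \<le> (\<Sum>\<tau>\<in>F0. n - j)" using above by (rule sum_mono)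
  also have "\<dots> = f_vector \<Delta> j * (n - j)" by (simp add: f_vector_def F0_def)
  finally show ?thesis .
qed

lemma f_vector_div_binomial_Suc_le:
  assumes \<Delta>: "simplicial_complex n \<Delta>" and "j < n"
  shows "real (f_vector \<Delta> (Suc j)) / real (n choose Suc j) \<le> real (f_vector \<Delta> j) / real (n choose j)"
proof -
  have binom: "(n choose Suc j) * Suc j = (n choose j) * (n - j)"
    by (metis binomial_absorb_comp binomial_absorption mult.commute)
  have "f_vector \<Delta> (Suc j) * (n choose j) * (n - j) = f_vector \<Delta> (Suc j) * Suc j * (n choose Suc j)"
    by (metis binom mult.assoc mult.commute)
  also have "\<dots> \<le> f_vector \<Delta> j * (n - j) * (n choose Suc j)"
    using f_vector_Suc_mult_le[OF \<Delta>] by (rule mult_right_mono) simp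
  also have "\<dots> = f_vector \<Delta> j * (n choose Suc j) * (n - j)" by simp
  finally have "f_vector \<Delta> (Suc j) * (n choose j) \<le> f_vector \<Delta> j * (n choose Suc j)"
    using \<open>j < n\<close> by simp
  then have "real (f_vector \<Delta> (Suc j)) * real (n choose j) \<le> real (f_vector \<Delta> j) * real (n choose Suc j)"
    by (metis of_nat_le_iff of_nat_mult)
  moreover have "0 < real (n choose Suc j)" "0 < real (n choose j)" using \<open>j < n\<close> by simp_all
  ultimately show ?thesis by (simp add: divide_simps)
qed

lemma SR_hilbert_in_nonneg_span_skel:
  assumes \<Delta>: "simplicial_complex n \<Delta>"
  shows "SR_hilbert n \<Delta> \<in> nonneg_span n (\<lambda>l. SR_hilbert n (skel n l))"
proof -
  \<comment> \<open>\<open>r (Suc n) = 0\<close> makes \<open>\<Sum>l=j..n. w l\<close> telescope to \<open>r j\<close>.\<close>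
  define r where "r j = (if j \<le> n then real (f_vector \<Delta> j) / real (n choose j) else 0)" for j
  define w where "w l = r l - r (Suc l)" for l
  have "0 \<le> w l" for l
    using f_vector_div_binomial_Suc_le[OF \<Delta>, of l] by (cases "l < n") (auto simp: w_def r_def)
  moreover have "SR_hilbert n \<Delta> i = (\<Sum>l\<le>n. w l * SR_hilbert n (skel n l) i)" for i
  proof -
    have "(\<Sum>l=j..n. w l) = r j" if "j \<le> n" for j
      using sum_Suc_diff[of j n r] that by (simp add: w_def sum_subtractf r_def)
    then have "(\<Sum>l\<le>n. w l * SR_hilbert n (skel n l) i)
        = (\<Sum>j\<le>n. real (f_vector \<Delta> j) * real (supp_count n j i))"
      unfolding sum_SR_hilbert_skel by (intro sum.cong refl) (simp add: r_def)
    then show ?thesis using SR_hilbert_eq_sum_f_vector[OF \<Delta>] by simp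
  qed
  ultimately show ?thesis unfolding nonneg_span_def by blast
qed

lemma SR_cone_eq_nonneg_span_skel:
  "SR_cone n = nonneg_span n (\<lambda>l. SR_hilbert n (skel n l))"
proof
  show "SR_cone n \<subseteq> nonneg_span n (\<lambda>l. SR_hilbert n (skel n l))"
  proof
    fix f assume "f \<in> SR_cone n"
    then obtain c where c: "\<forall>\<Delta>. 0 \<le> c \<Delta>"
      and f: "\<forall>i. f i = (\<Sum>\<Delta>\<in>{\<Delta>. simplicial_complex n \<Delta>}. c \<Delta> * SR_hilbert n \<Delta> i)"
      unfolding SR_cone_def by blast
    have "(\<lambda>i. \<Sum>\<Delta>\<in>{\<Delta>. simplicial_complex n \<Delta>}. c \<Delta> * SR_hilbert n \<Delta> i)
        \<in> nonneg_span n (\<lambda>l. SR_hilbert n (skel n l))"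
      by (rule nonneg_comb_in_nonneg_span[OF finite_simplicial_complexes c])
        (simp add: SR_hilbert_in_nonneg_span_skel)
    moreover have "f = (\<lambda>i. \<Sum>\<Delta>\<in>{\<Delta>. simplicial_complex n \<Delta>}. c \<Delta> * SR_hilbert n \<Delta> i)"
      using f by (simp add: fun_eq_iff)
    ultimately show "f \<in> nonneg_span n (\<lambda>l. SR_hilbert n (skel n l))" by simp
  qed
next
  show "nonneg_span n (\<lambda>l. SR_hilbert n (skel n l)) \<subseteq> SR_cone n"
  proof
    fix f assume "f \<in> nonneg_span n (\<lambda>l. SR_hilbert n (skel n l))"
    then obtain c where c: "\<forall>l. 0 \<le> c l" "\<forall>i. f i = (\<Sum>l\<le>n. c l * SR_hilbert n (skel n l) i)"
      unfolding nonneg_span_def by blast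
    define c' where "c' \<Delta> = (\<Sum>l\<le>n. if skel n l = \<Delta> then c l else 0)" for \<Delta>
    have "0 \<le> c' \<Delta>" for \<Delta> unfolding c'_def using c(1) by (intro sum_nonneg) auto
    moreover have "f i = (\<Sum>\<Delta>\<in>{\<Delta>. simplicial_complex n \<Delta>}. c' \<Delta> * SR_hilbert n \<Delta> i)" for i
    proof -
      have "(\<Sum>\<Delta>\<in>{\<Delta>. simplicial_complex n \<Delta>}. c' \<Delta> * SR_hilbert n \<Delta> i)
          = (\<Sum>\<Delta>\<in>{\<Delta>. simplicial_complex n \<Delta>}. \<Sum>l\<le>n.
               if skel n l = \<Delta> then c l * SR_hilbert n (skel n l) i else 0)"
        unfolding c'_def sum_distrib_right by (intro sum.cong refl) auto
      also have "\<dots> = (\<Sum>l\<le>n. \<Sum>\<Delta>\<in>{\<Delta>. simplicial_complex n \<Delta>}.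
               if skel n l = \<Delta> then c l * SR_hilbert n (skel n l) i else 0)"
        by (rule sum.swap)
      also have "\<dots> = (\<Sum>l\<le>n. c l * SR_hilbert n (skel n l) i)"
        using finite_simplicial_complexes simplicial_complex_skel by (simp add: sum.delta)
      finally show ?thesis using c(2) by simp
    qed
    ultimately show "f \<in> SR_cone n" unfolding SR_cone_def by blast
  qed
qed

theorem corollary4p15:
  fixes n :: nat
  shows "(\<forall>v. extremal_ray (SR_cone n) v \<longleftrightarrow>
            (\<exists>l\<le>n. \<exists>t>0. \<forall>i. v i = t * SR_hilbert n (skel n l) i))
       \<and> (\<forall>c :: nat \<Rightarrow> real. (\<forall>i. (\<Sum>l\<le>n. c l * SR_hilbert n (skel n l) i) = 0)
             \<longrightarrow> (\<forall>l\<le>n. c l = 0))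
       \<and> SR_cone n = {f. \<exists>c :: nat \<Rightarrow> real. (\<forall>l. 0 \<le> c l) \<and>
             (\<forall>i. f i = (\<Sum>l\<le>n. c l * SR_hilbert n (skel n l) i))}"
  using extremal_ray_nonneg_span_iff[OF lin_indep_upto_SR_hilbert_skel]
    lin_indep_upto_SR_hilbert_skel SR_cone_eq_nonneg_span_skel
  unfolding lin_indep_upto_def nonneg_span_def by simp

end
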